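(* Let $q$ be a prime power and let $C$ be an $[n,k,d]_q$ Griesmer optimal linear code with $k\ge 3$. Then: (1) if $\Gamma_q(n,k,d)<k$, then $q\mid d$; (2) if $q\nmid d$, then $C$ is a Griesmer code, i.e. $n=g_q(k,d)$.
   Context: An $[n,k,d]_q$ linear code is a $k$-dimensional subspace of $\mathbb{F}_q^n$ with minimum nonzero Hamming weight $d$. Let $g_q(k,d)=\sum_{i=0}^{k-1}\lceil d/q^i\rceil$ (the Griesmer bound says $n\ge g_q(k,d)$ for every $[n,k,d]_q$ code). $C$ is a Griesmer code if $n=g_q(k,d)$, and Griesmer optimal if $n<g_q(k,d+1)$ (so the Griesmer bound rules out an $[n,k,d+1]_q$ code). For a Griesmer optimal $[n,k,d]_q$ code, $\Gamma_q(n,k,d)=k$ if $n=g_q(k,d)$; otherwise $\Gamma_q(n,k,d)$ is the smallest non-negative integer $k_1$ such that $n-g_q(k_1,d)\ge g_q\!\left(k-k_1,\lceil d/q^{k_1}\rceil+1\right)$ (with $g_q(0,\cdot)=0$). *)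

theory Defs
  imports "HOL-Analysis.Analysis"
begin

definition ceil_div :: "nat \<Rightarrow> nat \<Rightarrow> nat" where
  "ceil_div a b = (a + b - 1) div b"

definition griesmer :: "nat \<Rightarrow> nat \<Rightarrow> nat \<Rightarrow> nat" where
  "griesmer q k d = (\<Sum>i<k. ceil_div d (q ^ i))"

definition hamming_wt :: "('a::zero) ^ 'n \<Rightarrow> nat" where
  "hamming_wt v = card {i. v $ i \<noteq> 0}"

definition min_wt :: "(('a::zero) ^ 'n) set \<Rightarrow> nat" where
  "min_wt C = Min {hamming_wt v | v. v \<in> C \<and> v \<noteq> 0}"

definition linear_code :: "(('a::{finite,field}) ^ 'n) set \<Rightarrow> nat \<Rightarrow> nat \<Rightarrow> bool" where
  "linear_code C k d \<longleftrightarrow> vec.subspace C \<and> vec.dim C = k \<and> min_wt C = d"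

definition griesmer_optimal :: "nat \<Rightarrow> nat \<Rightarrow> nat \<Rightarrow> nat \<Rightarrow> bool" where
  "griesmer_optimal q n k d \<longleftrightarrow> n < griesmer q k (d + 1)"

definition Gamma :: "nat \<Rightarrow> nat \<Rightarrow> nat \<Rightarrow> nat \<Rightarrow> nat" where
  "Gamma q n k d =
     (if n = griesmer q k d then k
      else (LEAST k1. int n - int (griesmer q k1 d)
                        \<ge> int (griesmer q (k - k1) (ceil_div d (q ^ k1) + 1))))"

end

theory Submission
  imports Defs
begin

text \<open>
  Everything rests on the Griesmer bound \<open>n \<ge> g\<^sub>q(k,d)\<close>. If \<open>q\<close> does not divide \<open>d\<close>,
  neither does \<open>q\<^sup>i\<close> for \<open>i \<ge> 1\<close>, so only the \<open>i = 0\<close> summand of \<open>g\<^sub>q(k,d)\<close> changes when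
  \<open>d\<close> increases by one: \<open>g\<^sub>q(k,d+1) = g\<^sub>q(k,d) + 1\<close>, and Griesmer optimality squeezes \<open>n\<close>
  down to \<open>g\<^sub>q(k,d)\<close>. Since \<open>\<Gamma>\<^sub>q(n,k,d) = k\<close> for Griesmer codes, the first claim is the
  contrapositive of the second.

  The Griesmer bound is proved by the residual code argument, relative to an arbitrary
  set \<open>S\<close> of coordinates: take a codeword \<open>c\<close> of minimum weight \<open>w \<ge> d\<close> on \<open>S\<close> and a
  hyperplane \<open>H\<close> of the code avoiding \<open>c\<close>. For \<open>0 \<noteq> v \<in> H\<close>, counting zeros of
  \<open>v + a c\<close> over all scalars \<open>a\<close> shows that some \<open>v + a c\<close> vanishes on at least \<open>w/q\<close>
  coordinates of the support of \<open>c\<close>; minimality of \<open>w\<close> then forces \<open>v\<close> to have weight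
  at least \<open>\<lceil>d/q\<rceil>\<close> outside that support, and induction on the dimension applies.
\<close>

lemma ceil_div_le_iff:
  assumes "b > 0"
  shows "ceil_div a b \<le> t \<longleftrightarrow> a \<le> b * t"
proof -
  have "ceil_div a b \<le> t \<longleftrightarrow> (a + b - 1) div b < Suc t"
    unfolding ceil_div_def by (rule less_Suc_eq_le[symmetric])
  also have "\<dots> \<longleftrightarrow> a + b - 1 < Suc t * b"
    using assms by (simp add: div_less_iff_less_mult)
  also have "\<dots> \<longleftrightarrow> a \<le> b * t"
    using assms by (auto simp: algebra_simps)
  finally show ?thesis .
qed

lemma nat_eq_iff_same_upper_bounds:
  "(x::nat) = y \<longleftrightarrow> (\<forall>t. x \<le> t \<longleftrightarrow> y \<le> t)"
  by (auto intro: antisym)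

lemma ceil_div_ceil_div:
  assumes "b > 0" "c > 0"
  shows "ceil_div (ceil_div a b) c = ceil_div a (b * c)"
  using assms by (simp add: nat_eq_iff_same_upper_bounds ceil_div_le_iff mult.assoc)

lemma ceil_div_Suc:
  assumes "b > 0" "\<not> b dvd a"
  shows "ceil_div (Suc a) b = ceil_div a b"
proof -
  have "Suc a \<le> b * t \<longleftrightarrow> a \<le> b * t" for t
    using assms by (auto simp: Suc_le_eq order.order_iff_strict)
  then show ?thesis using assms(1) by (simp add: nat_eq_iff_same_upper_bounds ceil_div_le_iff)
qed

lemma griesmer_Suc:
  assumes "q > 0"
  shows "griesmer q (Suc k) d = d + griesmer q k (ceil_div d q)"
proof -
  have "griesmer q (Suc k) d = ceil_div d 1 + (\<Sum>i<k. ceil_div d (q ^ Suc i))"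
    unfolding griesmer_def by (subst sum.lessThan_Suc_shift) simp
  moreover have "ceil_div d 1 = d" by (simp add: ceil_div_def)
  ultimately show ?thesis
    using assms by (simp add: griesmer_def ceil_div_ceil_div)
qed

lemma griesmer_Suc_distance:
  assumes "q > 0" "\<not> q dvd d" "k > 0"
  shows "griesmer q k (Suc d) = Suc (griesmer q k d)"
proof -
  obtain j where k: "k = Suc j" using assms(3) gr0_implies_Suc by blast
  have "\<not> q ^ Suc i dvd d" for i using assms(2) dvd_mult_left by auto
  then have "griesmer q j (ceil_div (Suc d) q) = griesmer q j (ceil_div d q)"
    using assms(1) unfolding griesmer_def by (simp add: ceil_div_ceil_div ceil_div_Suc flip: power_Suc)
  then show ?thesis using assms(1) by (simp add: k griesmer_Suc)
qed

definition weight_on :: "'n set \<Rightarrow> ('a::zero) ^ 'n \<Rightarrow> nat" where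
  "weight_on S v = card {i \<in> S. v $ i \<noteq> 0}"

lemma hamming_wt_eq_weight_on_UNIV: "hamming_wt v = weight_on UNIV v"
  by (simp add: hamming_wt_def weight_on_def)

lemma weight_on_Un:
  "A \<inter> B = {} \<Longrightarrow> weight_on (A \<union> B) v = weight_on A v + weight_on B v"
  unfolding weight_on_def by (subst card_Un_disjoint[symmetric]) (auto intro: arg_cong[where f = card])

lemma sum_card_zeros_on_line:
  fixes v c :: "('a::{finite,field}) ^ 'n"
  assumes "\<And>i. i \<in> P \<Longrightarrow> c $ i \<noteq> 0"
  shows "(\<Sum>a\<in>UNIV. card {i \<in> P. v $ i + a * c $ i = 0}) = card P"
proof -
  have root: "card {a. v $ i + a * c $ i = 0} = 1" if "i \<in> P" for i
  proof -
    have "{a. v $ i + a * c $ i = 0} = {- v $ i / c $ i}"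
      using assms[OF that] by (auto simp: field_simps eq_neg_iff_add_eq_0)
    then show ?thesis by simp
  qed
  have "(\<Sum>a\<in>UNIV. card {i \<in> P. v $ i + a * c $ i = 0})
      = card (SIGMA a:UNIV. {i \<in> P. v $ i + a * c $ i = 0})"
    by simp
  also have "\<dots> = card (SIGMA i:P. {a. v $ i + a * c $ i = 0})"
    by (rule bij_betw_same_card[of prod.swap]) (auto simp: bij_betw_def image_iff)
  also have "\<dots> = (\<Sum>i\<in>P. 1)"
    by (simp add: root)
  finally show ?thesis by simp
qed

lemma exists_card_zeros_on_line_ge:
  fixes v c :: "('a::{finite,field}) ^ 'n"
  assumes "\<And>i. i \<in> P \<Longrightarrow> c $ i \<noteq> 0"
  obtains a where "card P \<le> CARD('a) * card {i \<in> P. v $ i + a * c $ i = 0}"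
proof (rule ccontr)
  assume "\<not> thesis"
  with that have "CARD('a) * card {i \<in> P. v $ i + a * c $ i = 0} < card P" for a
    by (meson not_le)
  then have "(\<Sum>a\<in>UNIV. CARD('a) * card {i \<in> P. v $ i + a * c $ i = 0}) < (\<Sum>a\<in>(UNIV::'a set). card P)"
    by (intro sum_strict_mono) auto
  then show False
    by (simp add: sum_distrib_left[symmetric] sum_card_zeros_on_line[OF assms])
qed

lemma weight_on_residual_bound:
  fixes v c :: "('a::{finite,field}) ^ 'n"
  assumes min: "\<And>a. weight_on S c \<le> weight_on S (v + a *s c)"
  shows "weight_on S c \<le> CARD('a) * weight_on {i \<in> S. c $ i = 0} v"
proof -
  define P where "P = {i \<in> S. c $ i \<noteq> 0}"
  define T where "T = {i \<in> S. c $ i = 0}"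
  have S: "S = T \<union> P" and disj: "T \<inter> P = {}" unfolding P_def T_def by auto
  have wc: "weight_on S c = card P" unfolding weight_on_def P_def by simp
  obtain a where a: "card P \<le> CARD('a) * card {i \<in> P. v $ i + a * c $ i = 0}"
    using exists_card_zeros_on_line_ge[of P c v] unfolding P_def by auto
  define Z where "Z = {i \<in> P. v $ i + a * c $ i = 0}"
  have "card Z \<le> card P" unfolding Z_def by (intro card_mono) auto
  have "weight_on P (v + a *s c) = card P - card Z"
  proof -
    have "{i \<in> P. (v + a *s c) $ i \<noteq> 0} = P - Z" unfolding Z_def by auto
    then show ?thesis unfolding weight_on_def by (simp add: card_Diff_subset Z_def)
  qed
  moreover have "weight_on T (v + a *s c) = weight_on T v"
    unfolding weight_on_def T_def by (auto intro: arg_cong[where f = card])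
  ultimately have "weight_on S (v + a *s c) = weight_on T v + (card P - card Z)"
    by (simp add: S weight_on_Un[OF disj])
  with min[of a] wc \<open>card Z \<le> card P\<close> have "card Z \<le> weight_on T v" by simp
  with a show ?thesis unfolding wc T_def Z_def by (meson le_trans mult_le_mono2)
qed

lemma (in vector_space) exists_hyperplane_avoiding:
  assumes "subspace V" "dim V = Suc k" "c \<in> V" "c \<noteq> 0"
  obtains H where "subspace H" "H \<subseteq> V" "dim H = k" "c \<notin> H"
proof -
  obtain B where B: "{c} \<subseteq> B" "B \<subseteq> V" "independent B" "V \<subseteq> span B"
    using maximal_independent_subset_extend[of "{c}" V] assms(3,4)
    by (auto simp: independent_insert)
  have "card B = Suc k" using dim_unique[OF B(2,4,3) refl] assms(2) by simp
  then have "finite B" by (simp add: card_ge_0_finite)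
  have indep: "independent (B - {c})" using B(3) independent_mono by blast
  show thesis
  proof
    show "subspace (span (B - {c}))" by (rule subspace_span)
    show "span (B - {c}) \<subseteq> V"
      using B(2) assms(1) by (metis Diff_subset span_minimal subset_trans)
    show "dim (span (B - {c})) = k"
      using dim_span_eq_card_independent[OF indep] \<open>card B = Suc k\<close> \<open>finite B\<close> B(1) by simp
    have "independent (insert c (B - {c}))" using B by (simp add: insert_absorb)
    then show "c \<notin> span (B - {c})" by (metis Diff_iff insertI1 independent_insert)
  qed
qed

lemma griesmer_bound_weight_on:
  fixes V :: "(('a::{finite,field}) ^ 'n) set"
  assumes "vec.subspace V" "vec.dim V = k"
    and "\<And>v. v \<in> V \<Longrightarrow> v \<noteq> 0 \<Longrightarrow> d \<le> weight_on S v"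
  shows "griesmer CARD('a) k d \<le> card S"
  using assms
proof (induction k arbitrary: V S d)
  case 0
  then show ?case by (simp add: griesmer_def)
next
  case (Suc k)
  let ?q = "CARD('a)"
  obtain c0 where "c0 \<in> V" "c0 \<noteq> 0"
    using Suc.prems(2) vec.dim_eq_0[of V] by auto
  then obtain c where c: "c \<in> V" "c \<noteq> 0"
    and c_min: "\<And>u. u \<in> V \<Longrightarrow> u \<noteq> 0 \<Longrightarrow> weight_on S c \<le> weight_on S u"
    using ex_has_least_nat[of "\<lambda>u. u \<in> V \<and> u \<noteq> 0" c0 "weight_on S"] by blast
  have d_le: "d \<le> weight_on S c" using Suc.prems(3) c .
  obtain H where H: "vec.subspace H" "H \<subseteq> V" "vec.dim H = k" "c \<notin> H"
    using vec.exists_hyperplane_avoiding[OF Suc.prems(1,2) c] .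
  define T where "T = {i \<in> S. c $ i = 0}"
  have "ceil_div d ?q \<le> weight_on T v" if v: "v \<in> H" "v \<noteq> 0" for v
  proof -
    have "v + a *s c \<in> V" for a
      using v(1) H(2) c(1) Suc.prems(1) by (meson subsetD vec.subspace_add vec.subspace_scale)
    moreover have "v + a *s c \<noteq> 0" for a
    proof
      assume "v + a *s c = 0"
      with v(2) have "a \<noteq> 0" by auto
      with \<open>v + a *s c = 0\<close> have "c = (- inverse a) *s v"
        by (simp add: vec_eq_iff field_simps eq_neg_iff_add_eq_0)
      with v(1) H(1,4) show False by (metis vec.subspace_scale)
    qed
    ultimately have "weight_on S c \<le> ?q * weight_on T v"
      unfolding T_def by (intro weight_on_residual_bound c_min)
    with d_le show ?thesis by (simp add: ceil_div_le_iff)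
  qed
  then have "griesmer ?q k (ceil_div d ?q) \<le> card T"
    using Suc.IH[OF H(1,3)] by blast
  moreover have "card S = weight_on S c + card T"
  proof -
    have "S = {i \<in> S. c $ i \<noteq> 0} \<union> T" unfolding T_def by auto
    then show ?thesis unfolding weight_on_def T_def
      by (metis (no_types, lifting) card_Un_disjoint disjoint_iff finite mem_Collect_eq)
  qed
  ultimately show ?case using d_le by (simp add: griesmer_Suc)
qed

lemma min_wt_le:
  fixes C :: "(('a::zero) ^ 'n) set"
  assumes "v \<in> C" "v \<noteq> 0"
  shows "min_wt C \<le> hamming_wt v"
proof -
  let ?W = "{hamming_wt u | u. u \<in> C \<and> u \<noteq> 0}"
  have "hamming_wt u \<le> CARD('n)" for u :: "'a ^ 'n"
    unfolding hamming_wt_def by (rule card_mono) auto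
  then have "?W \<subseteq> {..CARD('n)}" by blast
  then have "finite ?W" by (rule finite_subset) simp
  moreover have "hamming_wt v \<in> ?W" using assms by blast
  ultimately show ?thesis unfolding min_wt_def by (rule Min_le)
qed

lemma griesmer_bound:
  fixes C :: "(('a::{finite,field}) ^ 'n) set"
  assumes "linear_code C k d"
  shows "griesmer CARD('a) k d \<le> CARD('n)"
proof -
  have C: "vec.subspace C" "vec.dim C = k" "min_wt C = d"
    using assms unfolding linear_code_def by auto
  have "d \<le> weight_on UNIV v" if "v \<in> C" "v \<noteq> 0" for v
    using min_wt_le[OF that] C(3) by (simp add: hamming_wt_eq_weight_on_UNIV)
  from griesmer_bound_weight_on[OF C(1,2) this] show ?thesis by simp
qed

theorem lemma5:
  fixes C :: "(('a::{finite,field}) ^ 'n) set" and k d :: nat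
  defines "q \<equiv> CARD('a)" and "n \<equiv> CARD('n)"
  assumes code: "linear_code C k d"
    and opt: "griesmer_optimal q n k d"
    and k3: "k \<ge> 3"
  shows "(Gamma q n k d < k \<longrightarrow> q dvd d) \<and> (\<not> q dvd d \<longrightarrow> n = griesmer q k d)"
proof -
  have "\<not> q dvd d \<Longrightarrow> n = griesmer q k d"
  proof -
    assume "\<not> q dvd d"
    then have "griesmer q k (Suc d) = Suc (griesmer q k d)"
      using griesmer_Suc_distance[of q d k] k3 unfolding q_def by simp
    moreover have "griesmer q k d \<le> n"
      using griesmer_bound[OF code] unfolding q_def n_def .
    ultimately show ?thesis
      using opt unfolding griesmer_optimal_def Suc_eq_plus1 by linarith
  qed
  moreover have "Gamma q n k d = k" if "n = griesmer q k d"
    unfolding Gamma_def by (rule if_P[OF that])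
  ultimately show ?thesis by (metis less_irrefl)
qed

end
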